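(* Let $H(\mathbb{C})$ be the space of entire functions with the topology of uniform convergence on compact subsets, and for $a\in\mathbb{C}\setminus\{0\}$ let $T:H(\mathbb{C})\to H(\mathbb{C})$ be the translation operator $T(f)(z)=f(z+a)$. Then $T$ is not supermixing.
   Context: $H(\mathbb{C})$ is metrizable (a Fréchet space). A continuous map $T:X\to X$ is supermixing if for each nonempty open subset $U$ of $X$, $X=\overline{\bigcup_{i=0}^\infty\bigcap_{n=i}^\infty T^n(U)}$. *)

theory Defs
  imports "HOL-Complex_Analysis.Complex_Analysis"
begin

definition entire_fns :: "(complex \<Rightarrow> complex) set" where
  "entire_fns = {f. f holomorphic_on UNIV}"

text \<open>Topology of uniform convergence on compact subsets: a set U of entire functions
  is open iff every f in U has a basic neighbourhood
  {g entire. sup over K of |g - f| < e} inside U, for some compact K and e > 0.\<close>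
definition H_open :: "(complex \<Rightarrow> complex) set \<Rightarrow> bool" where
  "H_open U \<longleftrightarrow> U \<subseteq> entire_fns \<and>
     (\<forall>f\<in>U. \<exists>K e. compact K \<and> e > 0 \<and>
        {g \<in> entire_fns. \<forall>z\<in>K. cmod (g z - f z) < e} \<subseteq> U)"

definition H_top :: "(complex \<Rightarrow> complex) topology" where
  "H_top = topology H_open"

lemma istopology_H_open: "istopology H_open"
  unfolding istopology_def
proof (intro conjI allI impI)
  fix S T assume S: "H_open S" and T: "H_open T"
  show "H_open (S \<inter> T)"
    unfolding H_open_def
  proof (intro conjI ballI)
    show "S \<inter> T \<subseteq> entire_fns" using S unfolding H_open_def by blast
    fix f assume f: "f \<in> S \<inter> T"
    obtain K1 e1 where 1: "compact K1" "e1 > 0" "{g \<in> entire_fns. \<forall>z\<in>K1. cmod (g z - f z) < e1} \<subseteq> S"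
      using S f unfolding H_open_def by blast
    obtain K2 e2 where 2: "compact K2" "e2 > 0" "{g \<in> entire_fns. \<forall>z\<in>K2. cmod (g z - f z) < e2} \<subseteq> T"
      using T f unfolding H_open_def by blast
    show "\<exists>K e. compact K \<and> e > 0 \<and> {g \<in> entire_fns. \<forall>z\<in>K. cmod (g z - f z) < e} \<subseteq> S \<inter> T"
      apply (rule exI[of _ "K1 \<union> K2"], rule exI[of _ "min e1 e2"])
      using 1 2 by fastforce
  qed
next
  fix K :: "(complex \<Rightarrow> complex) set set" assume "\<forall>S\<in>K. H_open S"
  then show "H_open (\<Union>K)" unfolding H_open_def by (meson Union_iff Union_least subset_iff)
qed

lemma topspace_H_top: "topspace H_top = entire_fns"
proof -
  have "H_open entire_fns" unfolding H_open_def
    by (auto intro!: exI[of _ "{}"] exI[of _ "1::real"])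
  then show ?thesis unfolding H_top_def topspace_def
    using istopology_H_open H_open_def by (auto simp: topology_inverse')
qed

definition translation :: "complex \<Rightarrow> (complex \<Rightarrow> complex) \<Rightarrow> (complex \<Rightarrow> complex)" where
  "translation a f = (\<lambda>z. f (z + a))"

definition supermixing :: "'a topology \<Rightarrow> ('a \<Rightarrow> 'a) \<Rightarrow> bool" where
  "supermixing X T \<longleftrightarrow>
     (\<forall>U. openin X U \<and> U \<noteq> {} \<longrightarrow>
        X closure_of (\<Union>i. \<Inter>n\<in>{i..}. (T ^^ n) ` U) = topspace X)"

end

theory Submission
  imports Defs
begin

text \<open>A supermixing map would make, for some i, all the iterates T^n(U), n \<ge> i, of a
  nonempty open set U meet. For a translation this fails as soon as U prescribes the
  values at 0 and at a in disjoint discs: a function in T^i(U) \<inter> T^(i+1)(U) comes from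
  f, g \<in> U with f(0) = g(a).\<close>

lemma funpow_translation: "(translation a ^^ n) f = (\<lambda>z. f (z + of_nat n * a))"
  by (induction n) (auto simp: translation_def algebra_simps)

lemma openin_H_top_eval:
  assumes "open S"
  shows "openin H_top {g \<in> entire_fns. g w \<in> S}"
proof -
  have "H_open {g \<in> entire_fns. g w \<in> S}"
    unfolding H_open_def
  proof (intro conjI ballI)
    show "{g \<in> entire_fns. g w \<in> S} \<subseteq> entire_fns" by blast
    fix f assume f: "f \<in> {g \<in> entire_fns. g w \<in> S}"
    then obtain e where e: "e > 0" "ball (f w) e \<subseteq> S"
      using assms open_contains_ball by blast
    have "{g \<in> entire_fns. \<forall>z\<in>{w}. cmod (g z - f z) < e} \<subseteq> {g \<in> entire_fns. g w \<in> S}"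
      using e(2) by (auto simp: dist_norm norm_minus_commute)
    with e(1) show "\<exists>K e. compact K \<and> e > 0 \<and>
        {g \<in> entire_fns. \<forall>z\<in>K. cmod (g z - f z) < e} \<subseteq> {g \<in> entire_fns. g w \<in> S}"
      by (intro exI[of _ "{w}"] exI[of _ e]) simp
  qed
  then show ?thesis
    unfolding H_top_def using istopology_H_open by (simp add: topology_inverse')
qed

lemma supermixing_imp_iterates_meet:
  assumes "supermixing X T" "openin X U" "U \<noteq> {}"
  shows "\<exists>i. (\<Inter>n\<in>{i..}. (T ^^ n) ` U) \<noteq> {}"
proof (rule ccontr)
  assume "\<nexists>i. (\<Inter>n\<in>{i..}. (T ^^ n) ` U) \<noteq> {}"
  then have "(\<Union>i. \<Inter>n\<in>{i..}. (T ^^ n) ` U) = {}"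
    by blast
  then have "X closure_of {} = topspace X"
    using assms unfolding supermixing_def by metis
  moreover have "topspace X \<noteq> {}"
    using assms(2,3) openin_subset by blast
  ultimately show False by simp
qed

lemma translation_iterates_disjoint:
  assumes "\<And>f g. f \<in> U \<Longrightarrow> g \<in> U \<Longrightarrow> f 0 \<noteq> g a"
  shows "(translation a ^^ n) ` U \<inter> (translation a ^^ Suc n) ` U = {}"
proof (rule ccontr)
  assume "(translation a ^^ n) ` U \<inter> (translation a ^^ Suc n) ` U \<noteq> {}"
  then obtain f g where fg: "f \<in> U" "g \<in> U"
    and "(translation a ^^ n) f = (translation a ^^ Suc n) g"
    by blast
  then have eq: "(\<lambda>z. f (z + of_nat n * a)) = (\<lambda>z. g (z + of_nat (Suc n) * a))"
    by (simp only: funpow_translation)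
  have "f 0 = g a"
    using fun_cong[OF eq, of "- of_nat n * a"] by (simp add: algebra_simps)
  with assms fg show False by blast
qed

theorem mainTheorem7:
  fixes a :: complex
  assumes "a \<noteq> 0"
  shows "\<not> supermixing H_top (translation a)"
proof
  assume sm: "supermixing H_top (translation a)"
  define U where "U = {g \<in> entire_fns. g 0 \<in> ball 0 1} \<inter> {g \<in> entire_fns. g a \<in> ball 3 1}"
  have "openin H_top U"
    unfolding U_def by (intro openin_Int openin_H_top_eval open_ball)
  moreover have "(\<lambda>z. 3 * z / a) \<in> U"
    using assms unfolding U_def entire_fns_def by (simp add: holomorphic_intros)
  ultimately obtain i h where h: "h \<in> (\<Inter>n\<in>{i..}. (translation a ^^ n) ` U)"
    using supermixing_imp_iterates_meet[OF sm] by blast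
  have "ball (0::complex) 1 \<inter> ball 3 1 = {}"
    by (rule disjoint_ballI) simp
  then have "f 0 \<noteq> g a" if "f \<in> U" "g \<in> U" for f g
    using that unfolding U_def by (auto simp del: mem_ball)
  then have "(translation a ^^ i) ` U \<inter> (translation a ^^ Suc i) ` U = {}"
    by (rule translation_iterates_disjoint)
  moreover have "h \<in> (translation a ^^ i) ` U \<inter> (translation a ^^ Suc i) ` U"
    using INT_D[OF h, of i] INT_D[OF h, of "Suc i"] by simp
  ultimately show False by simp
qed

end
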